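(* Let $d\ge2$, let $\mathcal L\subset\mathbb R^d$ be a unimodular lattice and let $\vec\alpha\in\mathbb R^d$ be badly approximable by $\mathbb Q\mathcal L$. For every $\mathcal D\subseteq\mathbb S_1^{d-1}$ with non-empty interior, $$\sup_{N\in\mathbb N} g_N(\mathcal D,\vec\alpha,\mathcal L)<\infty.$$
   Context: $\mathbb S_1^{d-1}$ is the unit sphere in $\mathbb R^d$. A unimodular lattice is a lattice of covolume $1$. $\vec\alpha$ is badly approximable by $\mathbb Q\mathcal L$ if there is $c>0$ with $|n\vec\alpha-\vec\ell|_\infty>c\,n^{-1/d}$ for all $\vec\ell\in\mathcal L$ and $n\in\mathbb N$ ($|\cdot|_\infty$ the maximum norm). For $\mathcal D\subseteq\mathbb S_1^{d-1}$ and $1\le n\le N$, let $$\delta_{n,N}(\mathcal D)=\min\{|(m-n)\vec\alpha+\vec\ell| : (m-n)\vec\alpha+\vec\ell\in\mathbb R_{>0}\mathcal D,\ 1\le m\le N,\ \vec\ell\in\mathcal L\}$$ (Euclidean norm) and $g_N(\mathcal D,\vec\alpha,\mathcal L)=|\{\delta_{n,N}(\mathcal D):1\le n\le N\}|$. *)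

theory Defs
  imports "HOL-Analysis.Analysis"
begin

definition lattice_of :: "real^'n^'n \<Rightarrow> (real^'n) set" where
  "lattice_of M = {M *v z | z. \<forall>i. z $ i \<in> \<int>}"

definition unimodular_lattice :: "(real^'n) set \<Rightarrow> bool" where
  "unimodular_lattice L \<longleftrightarrow> (\<exists>M. \<bar>det M\<bar> = 1 \<and> L = lattice_of M)"

text \<open>alpha badly approximable by QL (maximum norm = infnorm).\<close>
definition bad_approx :: "real^'n \<Rightarrow> (real^'n) set \<Rightarrow> bool" where
  "bad_approx \<alpha> L \<longleftrightarrow> (\<exists>c>0. \<forall>n::nat. n \<ge> 1 \<longrightarrow> (\<forall>l\<in>L.
      infnorm (real n *\<^sub>R \<alpha> - l) > c * real n powr (-1 / real CARD('n))))"

definition pos_cone :: "(real^'n) set \<Rightarrow> (real^'n) set" where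
  "pos_cone D = {t *\<^sub>R u | t u. t > 0 \<and> u \<in> D}"

definition delta :: "(real^'n) set \<Rightarrow> real^'n \<Rightarrow> (real^'n) set \<Rightarrow> nat \<Rightarrow> nat \<Rightarrow> real" where
  "delta D \<alpha> L n N = Inf {norm ((real m - real n) *\<^sub>R \<alpha> + l) | m l.
      1 \<le> m \<and> m \<le> N \<and> l \<in> L \<and> (real m - real n) *\<^sub>R \<alpha> + l \<in> pos_cone D}"

definition gN :: "nat \<Rightarrow> (real^'n) set \<Rightarrow> real^'n \<Rightarrow> (real^'n) set \<Rightarrow> nat" where
  "gN N D \<alpha> L = card ((\<lambda>n. delta D \<alpha> L n N) ` {1..N})"

end

theory Submission
  imports Defs
begin

text \<open>
  A lattice has a bounded covering radius and a shortest nonzero vector, and bad approximability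
  gives |k alpha + l| > c |k|^(-1/d) for all integers k \<noteq> 0 and l in L.

  Fix a direction u in an open cap contained in D. Reducing j alpha (0 \<le> j \<le> M) modulo L and
  applying the pigeonhole principle to boxes that are long in direction u and thin across it gives
  1 \<le> K \<le> M and l such that K alpha + l has length O(M^(-1/d)) and its component along u is close
  to a fixed multiple of K / M. Bad approximability excludes small K, so this component dominates
  and K alpha + l lies in the cone over D. Doing this for alpha and -alpha with M = (N - 1) div 2
  shows that every gap delta(n, N) is the norm of a vector k alpha + l with |k| \<le> 3M and length
  O(M^(-1/d)). By bad approximability and discreteness of L these vectors are mutually at distance
  at least a constant times M^(-1/d), so there are boundedly many of them, uniformly in N.
\<close>

section \<open>Lattices and badly approximable vectors\<close>

lemma norm_le_card_mult:
  fixes x :: "real^'n"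
  assumes "\<And>i. \<bar>x $ i\<bar> \<le> b"
  shows "norm x \<le> real CARD('n) * b"
  using norm_le_l1_cart[of x] sum_bounded_above[of UNIV "\<lambda>i. \<bar>x $ i\<bar>" b] assms by simp

lemma lattice_of_diff:
  assumes "x \<in> lattice_of M" "y \<in> lattice_of M"
  shows "x - y \<in> lattice_of M"
proof -
  obtain z w where "\<forall>i. z $ i \<in> \<int>" "x = M *v z" "\<forall>i. w $ i \<in> \<int>" "y = M *v w"
    using assms unfolding lattice_of_def by blast
  then show ?thesis
    unfolding lattice_of_def
    by (intro CollectI exI[of _ "z - w"]) (auto simp: matrix_vector_mult_diff_distrib)
qed

lemma zero_in_lattice_of: "0 \<in> lattice_of M"
  unfolding lattice_of_def by (auto intro: exI[of _ 0])

lemma lattice_of_uminus: "x \<in> lattice_of M \<Longrightarrow> - x \<in> lattice_of M"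
  using lattice_of_diff[OF zero_in_lattice_of] by simp

lemma lattice_of_covering:
  fixes M :: "real^'n^'n"
  assumes "det M \<noteq> 0"
  obtains \<rho> where "\<And>x. \<exists>l\<in>lattice_of M. norm (x - l) \<le> \<rho>"
proof -
  obtain M' where M': "M ** M' = mat 1"
    using assms invertible_det_nz[of M] unfolding invertible_def by blast
  obtain B where B: "\<And>y. norm (M *v y) \<le> B * norm y" "B > 0"
    using linear_bounded_pos[OF matrix_vector_mul_linear[of M]] by blast
  have "\<exists>l\<in>lattice_of M. norm (x - l) \<le> B * real CARD('n)" for x
  proof -
    define y where "y = M' *v x"
    define z where "z = ((\<chi> i. of_int \<lfloor>y $ i\<rfloor>) :: real^'n)"
    have "M *v z \<in> lattice_of M" unfolding lattice_of_def z_def by auto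
    have "norm (y - z) \<le> real CARD('n) * 1"
      by (rule norm_le_card_mult) (simp add: z_def; linarith)
    have "x - M *v z = M *v (y - z)"
      by (simp add: y_def matrix_vector_mul_assoc M' matrix_vector_mult_diff_distrib)
    also have "norm \<dots> \<le> B * norm (y - z)" by (rule B(1))
    also have "\<dots> \<le> B * real CARD('n)" using \<open>norm (y - z) \<le> _\<close> B(2) by simp
    finally show ?thesis using \<open>M *v z \<in> lattice_of M\<close> by blast
  qed
  then show thesis using that by blast
qed

lemma lattice_of_discrete:
  fixes M :: "real^'n^'n"
  assumes "det M \<noteq> 0"
  obtains \<mu> where "\<mu> > 0" "\<And>l. l \<in> lattice_of M \<Longrightarrow> l \<noteq> 0 \<Longrightarrow> \<mu> \<le> norm l"
proof -
  obtain M' where M': "M' ** M = mat 1"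
    using assms invertible_det_nz[of M] unfolding invertible_def by blast
  obtain B where B: "\<And>y. norm (M' *v y) \<le> B * norm y" "B > 0"
    using linear_bounded_pos[OF matrix_vector_mul_linear[of M']] by blast
  have "1 / B \<le> norm l" if l: "l \<in> lattice_of M" "l \<noteq> 0" for l
  proof -
    obtain z where z: "\<forall>i. z $ i \<in> \<int>" "l = M *v z"
      using l(1) unfolding lattice_of_def by blast
    obtain i where "z $ i \<noteq> 0"
      using l(2) z(2) by (metis matrix_vector_mult_0_right vec_eq_iff zero_index)
    moreover obtain k where "z $ i = of_int k" using z(1) Ints_cases by metis
    ultimately have "1 \<le> \<bar>z $ i\<bar>" by auto
    also have "\<dots> \<le> norm z" by (rule component_le_norm_cart)
    also have "z = M' *v l" by (simp add: z(2) matrix_vector_mul_assoc M')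
    also have "norm (M' *v l) \<le> B * norm l" by (rule B(1))
    finally show ?thesis using B(2) by (simp add: field_simps)
  qed
  with B(2) show thesis by (intro that[of "1 / B"]) auto
qed

lemma unimodular_latticeE:
  fixes L :: "(real^'n) set"
  assumes "unimodular_lattice L"
  obtains \<rho> \<mu> where "\<And>x y. x \<in> L \<Longrightarrow> y \<in> L \<Longrightarrow> x - y \<in> L" "\<And>l. l \<in> L \<Longrightarrow> - l \<in> L"
    "\<And>x. \<exists>l\<in>L. norm (x - l) \<le> \<rho>" "0 < \<mu>" "\<And>l. l \<in> L \<Longrightarrow> l \<noteq> 0 \<Longrightarrow> \<mu> \<le> norm l"
proof -
  obtain B where "\<bar>det B\<bar> = 1" and L: "L = lattice_of B"
    using assms unfolding unimodular_lattice_def by blast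
  then have "det B \<noteq> 0" by auto
  obtain \<rho> where "\<And>x. \<exists>l\<in>L. norm (x - l) \<le> \<rho>"
    using lattice_of_covering[OF \<open>det B \<noteq> 0\<close>, folded L] by blast
  moreover obtain \<mu> where "0 < \<mu>" "\<And>l. l \<in> L \<Longrightarrow> l \<noteq> 0 \<Longrightarrow> \<mu> \<le> norm l"
    using lattice_of_discrete[OF \<open>det B \<noteq> 0\<close>, folded L] by blast
  ultimately show thesis
    using that lattice_of_diff lattice_of_uminus unfolding L by blast
qed

lemma bad_approx_norm_lower_bound:
  fixes \<alpha> :: "real^'n"
  assumes "bad_approx \<alpha> L" and neg_closed: "\<And>l. l \<in> L \<Longrightarrow> - l \<in> L"
  obtains c where "0 < c"
    "\<And>k l. k \<in> \<int> \<Longrightarrow> k \<noteq> 0 \<Longrightarrow> l \<in> L \<Longrightarrow> c * \<bar>k\<bar> powr (-1 / real CARD('n)) < norm (k *\<^sub>R \<alpha> + l)"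
proof -
  obtain c where "0 < c" and c: "\<And>n l. 1 \<le> n \<Longrightarrow> l \<in> L \<Longrightarrow>
      c * real n powr (-1 / real CARD('n)) < infnorm (real n *\<^sub>R \<alpha> - l)"
    using assms(1) unfolding bad_approx_def by blast
  have "c * \<bar>k\<bar> powr (-1 / real CARD('n)) < norm (k *\<^sub>R \<alpha> + l)"
    if "k \<in> \<int>" "k \<noteq> 0" "l \<in> L" for k l
  proof -
    define n where "n = nat \<lfloor>\<bar>k\<bar>\<rfloor>"
    have "real n = \<bar>k\<bar>"
      using that(1) unfolding n_def
      by (metis Ints_abs floor_of_int Ints_cases of_nat_nat abs_ge_zero of_int_0_le_iff)
    define l' where "l' = (if 0 < k then - l else l)"
    have "l' \<in> L" using neg_closed that(3) by (simp add: l'_def)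
    have "norm (k *\<^sub>R \<alpha> + l) = norm (real n *\<^sub>R \<alpha> - l')"
    proof (cases "0 < k")
      case True
      then show ?thesis using \<open>real n = \<bar>k\<bar>\<close> by (simp add: l'_def)
    next
      case False
      then have "k *\<^sub>R \<alpha> + l = - (real n *\<^sub>R \<alpha> - l')" using \<open>real n = \<bar>k\<bar>\<close> by (simp add: l'_def)
      then show ?thesis by (simp only: norm_minus_cancel)
    qed
    moreover have "1 \<le> n"
      using \<open>real n = \<bar>k\<bar>\<close> that(1,2) by (metis Ints_nonzero_abs_ge1 of_nat_1 of_nat_le_iff)
    ultimately show ?thesis
      using c[OF _ \<open>l' \<in> L\<close>] infnorm_le_norm[of "real n *\<^sub>R \<alpha> - l'"] \<open>real n = \<bar>k\<bar>\<close> by fastforce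
  qed
  with \<open>0 < c\<close> show thesis using that by blast
qed

section \<open>Counting separated points\<close>

lemma card_le_if_coordinatewise_separated:
  fixes p :: "'a \<Rightarrow> real^'n"
  assumes nonneg: "\<And>i. 0 \<le> \<beta> i"
    and bounded: "\<And>x i. x \<in> A \<Longrightarrow> \<bar>p x $ i\<bar> \<le> \<beta> i"
    and separated: "\<And>x y. x \<in> A \<Longrightarrow> y \<in> A \<Longrightarrow> (\<And>i. \<bar>p x $ i - p y $ i\<bar> < 1) \<Longrightarrow> x = y"
  shows "finite A" "real (card A) \<le> (\<Prod>i\<in>UNIV. 2 * \<beta> i + 3)"
proof -
  define S where "S i = {- \<lceil>\<beta> i\<rceil> .. \<lceil>\<beta> i\<rceil>}" for i
  define key where "key x = (\<lambda>i\<in>UNIV. \<lfloor>p x $ i\<rfloor>)" for x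
  have key_into: "key ` A \<subseteq> PiE UNIV S"
  proof -
    have "\<lfloor>p x $ i\<rfloor> \<in> S i" if "x \<in> A" for x i
      using bounded[OF that, of i] unfolding S_def
      by (simp add: abs_le_iff floor_le_iff le_floor_iff) linarith
    then show ?thesis unfolding key_def by auto
  qed
  have "inj_on key A"
  proof (rule inj_onI)
    fix x y assume "x \<in> A" "y \<in> A" "key x = key y"
    have "\<bar>p x $ i - p y $ i\<bar> < 1" for i
    proof -
      have "\<lfloor>p x $ i\<rfloor> = \<lfloor>p y $ i\<rfloor>"
        using fun_cong[OF \<open>key x = key y\<close>, of i] by (simp add: key_def)
      then show ?thesis
        using floor_correct[of "p x $ i"] floor_correct[of "p y $ i"] by linarith
    qed
    then show "x = y" using separated \<open>x \<in> A\<close> \<open>y \<in> A\<close> by blast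
  qed
  moreover have "finite (PiE UNIV S)" by (simp add: S_def finite_PiE)
  ultimately show "finite A"
    using key_into finite_imageD finite_subset by blast
  have "card A \<le> card (PiE UNIV S)"
    using card_inj_on_le[OF \<open>inj_on key A\<close> key_into] \<open>finite (PiE UNIV S)\<close> .
  also have "\<dots> = (\<Prod>i\<in>UNIV. card (S i))" by (simp add: card_PiE)
  finally have "real (card A) \<le> (\<Prod>i\<in>UNIV. real (card (S i)))"
    unfolding of_nat_prod[symmetric] of_nat_le_iff .
  also have "\<dots> \<le> (\<Prod>i\<in>UNIV. 2 * \<beta> i + 3)"
  proof (rule prod_mono)
    fix i
    have "real (card (S i)) = 2 * of_int \<lceil>\<beta> i\<rceil> + 1"
      using nonneg[of i] by (simp add: S_def)
    then show "0 \<le> real (card (S i)) \<and> real (card (S i)) \<le> 2 * \<beta> i + 3"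
      using ceiling_correct[of "\<beta> i"] by simp
  qed
  finally show "real (card A) \<le> (\<Prod>i\<in>UNIV. 2 * \<beta> i + 3)" .
qed

lemma pigeonhole_close_pair:
  fixes y :: "nat \<Rightarrow> real^'n"
  assumes bounded: "\<And>j i. j \<le> M \<Longrightarrow> \<bar>y j $ i\<bar> \<le> B i"
    and widths: "\<And>i. 0 < a i"
    and few_boxes: "(\<Prod>i\<in>UNIV. 2 * B i / a i + 3) < real M + 1"
  shows "\<exists>j j'. j' < j \<and> j \<le> M \<and> (\<forall>i. \<bar>y j $ i - y j' $ i\<bar> < a i)"
proof (rule ccontr)
  assume no_pair: "\<not> ?thesis"
  define p where "p j = (\<chi> i. y j $ i / a i)" for j
  have "real (card {..M}) \<le> (\<Prod>i\<in>UNIV. 2 * (B i / a i) + 3)"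
  proof (rule card_le_if_coordinatewise_separated)
    show "0 \<le> B i / a i" for i
      using bounded[of 0 i] widths[of i] by simp
    show "\<bar>p j $ i\<bar> \<le> B i / a i" if "j \<in> {..M}" for j i
      using bounded[of j i] that widths[of i] by (simp add: p_def abs_div divide_right_mono)
    fix j j' assume "j \<in> {..M}" "j' \<in> {..M}" and close: "\<And>i. \<bar>p j $ i - p j' $ i\<bar> < 1"
    have "\<bar>y j $ i - y j' $ i\<bar> < a i" "\<bar>y j' $ i - y j $ i\<bar> < a i" for i
      using close[of i] widths[of i]
      by (simp_all add: p_def diff_divide_distrib[symmetric] abs_div abs_minus_commute)
    then show "j = j'" using no_pair \<open>j \<in> {..M}\<close> \<open>j' \<in> {..M}\<close>
      by (cases j j' rule: linorder_cases) blast+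
  qed
  then show False using few_boxes by simp
qed

lemma card_le_if_separated:
  fixes A :: "(real^'n) set"
  assumes "0 < s" "0 \<le> r"
    and bounded: "\<And>x. x \<in> A \<Longrightarrow> norm x \<le> r"
    and separated: "\<And>x y. x \<in> A \<Longrightarrow> y \<in> A \<Longrightarrow> x \<noteq> y \<Longrightarrow> s \<le> norm (x - y)"
  shows "finite A" "real (card A) \<le> (4 * real CARD('n) * r / s + 3) ^ CARD('n)"
proof -
  define \<kappa> where "\<kappa> = 2 * real CARD('n) / s"
  have "\<kappa> > 0" using \<open>0 < s\<close> by (simp add: \<kappa>_def)
  have "\<bar>(\<kappa> *\<^sub>R x) $ i\<bar> \<le> \<kappa> * r" if "x \<in> A" for x i
    using component_le_norm_cart[of x i] bounded[OF that] \<open>\<kappa> > 0\<close> by (simp add: abs_mult)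
  moreover have "x = y"
    if "x \<in> A" "y \<in> A" and close: "\<And>i. \<bar>(\<kappa> *\<^sub>R x) $ i - (\<kappa> *\<^sub>R y) $ i\<bar> < 1" for x y
  proof -
    have "\<bar>(x - y) $ i\<bar> \<le> 1 / \<kappa>" for i
    proof -
      have "\<kappa> * \<bar>(x - y) $ i\<bar> < 1"
        using close[of i] \<open>\<kappa> > 0\<close> by (simp add: abs_mult flip: right_diff_distrib)
      then show ?thesis using \<open>\<kappa> > 0\<close> by (simp add: field_simps)
    qed
    then have "norm (x - y) \<le> s / 2"
      using norm_le_card_mult[of "x - y" "1 / \<kappa>"] by (simp add: \<kappa>_def)
    then show "x = y" using separated[OF that(1,2)] \<open>0 < s\<close> by fastforce
  qed
  ultimately have "finite A" "real (card A) \<le> (\<Prod>i\<in>(UNIV::'n set). 2 * (\<kappa> * r) + 3)"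
    using card_le_if_coordinatewise_separated[of "\<lambda>_. \<kappa> * r" A "\<lambda>x. \<kappa> *\<^sub>R x"]
      \<open>\<kappa> > 0\<close> \<open>0 \<le> r\<close> by auto
  then show "finite A" "real (card A) \<le> (4 * real CARD('n) * r / s + 3) ^ CARD('n)"
    by (simp_all add: \<kappa>_def mult.assoc)
qed

section \<open>Short multiples in a cone\<close>

text \<open>Coordinates of x in the basis obtained from the standard one by replacing the i-th vector with u
  (a basis when u $ i \<noteq> 0): the i-th coordinate is the component along u.\<close>

definition oblique_coords :: "real^'n \<Rightarrow> 'n \<Rightarrow> real^'n \<Rightarrow> real^'n" where
  "oblique_coords u i x = (\<chi> j. if j = i then x $ i / u $ i else x $ j - x $ i / u $ i * u $ j)"

lemma linear_oblique_coords: "linear (oblique_coords u i)"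
  by (rule linearI) (simp_all add: oblique_coords_def vec_eq_iff add_divide_distrib algebra_simps)

lemma oblique_coords_decomp:
  assumes "u $ i \<noteq> 0"
  shows "x = oblique_coords u i x $ i *\<^sub>R u + (\<chi> j. if j = i then 0 else oblique_coords u i x $ j)"
  using assms by (simp add: oblique_coords_def vec_eq_iff)

lemma openin_sphere_contains_cap:
  fixes U :: "(real^'n) set"
  assumes "openin (top_of_set (sphere 0 1)) U" "U \<noteq> {}"
  obtains u \<eta> where "norm u = 1" "0 < \<eta>" "\<And>x. norm x = 1 \<Longrightarrow> norm (x - u) < \<eta> \<Longrightarrow> x \<in> U"
proof -
  obtain u where "u \<in> U" using assms(2) by blast
  then have "norm u = 1" using openin_imp_subset[OF assms(1)] by auto
  obtain \<eta> where "0 < \<eta>" "\<And>x. x \<in> sphere 0 1 \<Longrightarrow> dist x u < \<eta> \<Longrightarrow> x \<in> U"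
    using assms(1) \<open>u \<in> U\<close> unfolding openin_euclidean_subtopology_iff by blast
  then show thesis using that[OF \<open>norm u = 1\<close> \<open>0 < \<eta>\<close>] by (simp add: dist_norm)
qed

lemma norm_sgn_scaleR_add_sub_le:
  fixes u q :: "'a::real_normed_vector"
  assumes "norm u = 1" "t > 0" "t *\<^sub>R u + q \<noteq> 0"
  shows "norm (sgn (t *\<^sub>R u + q) - u) \<le> 2 * norm q / t"
proof -
  define v where "v = t *\<^sub>R u + q"
  have "norm v > 0" using assms(3) by (simp add: v_def)
  have "(1 / t) *\<^sub>R v = u + (1 / t) *\<^sub>R q"
    using \<open>t > 0\<close> by (simp add: v_def scaleR_add_right)
  then have "sgn v - u = (1 / norm v - 1 / t) *\<^sub>R v + (1 / t) *\<^sub>R q"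
    by (simp add: sgn_div_norm scaleR_diff_left divide_inverse_commute)
  then have "norm (sgn v - u) \<le> \<bar>1 / norm v - 1 / t\<bar> * norm v + norm q / t"
    using \<open>t > 0\<close> norm_triangle_ineq[of "(1 / norm v - 1 / t) *\<^sub>R v" "(1 / t) *\<^sub>R q"] by simp
  also have "\<bar>1 / norm v - 1 / t\<bar> * norm v = \<bar>t - norm v\<bar> / t"
    using \<open>norm v > 0\<close> \<open>t > 0\<close> by (simp add: field_simps abs_div abs_mult)
  also have "\<bar>t - norm v\<bar> \<le> norm q"
    using norm_triangle_ineq3[of "t *\<^sub>R u" v] assms(1,2) by (simp add: v_def)
  then have "\<bar>t - norm v\<bar> / t \<le> norm q / t" using \<open>t > 0\<close> by (simp add: divide_right_mono)
  finally show ?thesis by (simp add: v_def)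
qed

lemma scaleR_add_mem_pos_cone:
  assumes cap: "\<And>x. norm x = 1 \<Longrightarrow> norm (x - u) < \<eta> \<Longrightarrow> x \<in> D"
    and "norm u = 1" "t > 0" "norm q < t" "2 * norm q < \<eta> * t"
  shows "t *\<^sub>R u + q \<in> pos_cone D"
proof -
  define v where "v = t *\<^sub>R u + q"
  have "norm (t *\<^sub>R u) = t" using assms(2,3) by simp
  have "v \<noteq> 0"
  proof
    assume "v = 0"
    then have "q = - (t *\<^sub>R u)" by (simp add: v_def add_eq_0_iff2)
    then show False using assms(4) \<open>norm (t *\<^sub>R u) = t\<close> by simp
  qed
  have "norm (sgn v - u) \<le> 2 * norm q / t"
    using norm_sgn_scaleR_add_sub_le[OF assms(2,3)] \<open>v \<noteq> 0\<close> by (simp add: v_def)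
  also have "\<dots> < \<eta>" using assms(3,5) by (simp add: pos_divide_less_eq)
  finally have "sgn v \<in> D" using cap \<open>v \<noteq> 0\<close> by (simp add: norm_sgn)
  moreover have "v = norm v *\<^sub>R sgn v" using \<open>v \<noteq> 0\<close> by (simp add: sgn_div_norm)
  ultimately show ?thesis
    using \<open>v \<noteq> 0\<close> unfolding pos_cone_def v_def[symmetric]
    by (intro CollectI exI[of _ "norm v"] exI[of _ "sgn v"]) auto
qed

lemma prod_box_count_le:
  fixes a :: "'n::finite \<Rightarrow> real"
  assumes "\<And>j. 0 < a j" "\<And>j. a j \<le> 1" "0 \<le> B"
  shows "(\<Prod>j\<in>UNIV. 2 * B / a j + 3) \<le> (2 * B + 3) ^ CARD('n) / (\<Prod>j\<in>UNIV. a j)"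
proof -
  have "(\<Prod>j\<in>UNIV. 2 * B / a j + 3) \<le> (\<Prod>j\<in>UNIV. (2 * B + 3) / a j)"
  proof (rule prod_mono)
    fix j
    have "3 \<le> 3 / a j" using assms(1,2)[of j] by (simp add: field_simps)
    then show "0 \<le> 2 * B / a j + 3 \<and> 2 * B / a j + 3 \<le> (2 * B + 3) / a j"
      using assms(1)[of j] assms(3) by (simp add: add_divide_distrib)
  qed
  also have "\<dots> = (2 * B + 3) ^ CARD('n) / (\<Prod>j\<in>UNIV. a j)"
    by (simp add: prod_dividef)
  finally show ?thesis .
qed

lemma dirichlet_linear_coords:
  fixes \<phi> :: "real^'n \<Rightarrow> real^'n" and \<alpha> z :: "real^'n"
  assumes "linear \<phi>"
    and diff_closed: "\<And>x y. x \<in> L \<Longrightarrow> y \<in> L \<Longrightarrow> x - y \<in> L"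
    and covering: "\<And>x. \<exists>l\<in>L. norm (\<phi> (x - l)) \<le> B"
    and z: "\<And>i. \<bar>z $ i\<bar> \<le> 1" and widths: "\<And>i. 0 < a i" "\<And>i. a i \<le> 1"
    and volume: "(2 * B + 5) ^ CARD('n) \<le> real M * (\<Prod>i\<in>UNIV. a i)"
  shows "\<exists>K\<in>{1..M}. \<exists>l\<in>L. \<forall>i. \<bar>\<phi> (real K *\<^sub>R \<alpha> + l) $ i - real K / real M * z $ i\<bar> < a i"
proof -
  have "0 \<le> B" using covering[of 0] norm_ge_zero order_trans by blast
  have "(\<Prod>i\<in>UNIV. 2 * (B + 1) / a i + 3) \<le> (2 * B + 5) ^ CARD('n) / (\<Prod>i\<in>UNIV. a i)"
    using prod_box_count_le[of a "B + 1"] widths \<open>0 \<le> B\<close> by (simp add: algebra_simps)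
  also have "\<dots> \<le> real M"
    using volume widths(1) by (simp add: pos_divide_le_eq prod_pos)
  finally have few_boxes: "(\<Prod>i\<in>UNIV. 2 * (B + 1) / a i + 3) < real M + 1" by simp
  have "\<forall>j::nat. \<exists>l. l \<in> L \<and> norm (\<phi> (real j *\<^sub>R \<alpha> - l)) \<le> B"
    using covering by blast
  then obtain lj where lj: "\<And>j. lj j \<in> L" "\<And>j::nat. norm (\<phi> (real j *\<^sub>R \<alpha> - lj j)) \<le> B"
    by (metis choice)
  define y where "y j = \<phi> (real j *\<^sub>R \<alpha> - lj j) - (real j / real M) *\<^sub>R z" for j
  have "\<bar>y j $ i\<bar> \<le> B + 1" if "j \<le> M" for j i
  proof -
    have "\<bar>real j / real M * z $ i\<bar> \<le> 1"
    proof (cases "M = 0")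
      case False
      then have "real j / real M \<le> 1" using that by simp
      then have "real j / real M * \<bar>z $ i\<bar> \<le> 1" by (rule mult_le_one) (simp_all add: z)
      then show ?thesis by (simp add: abs_mult)
    qed simp
    then show ?thesis
      using component_le_norm_cart[of "\<phi> (real j *\<^sub>R \<alpha> - lj j)" i] lj(2)[of j]
        abs_triangle_ineq4[of "\<phi> (real j *\<^sub>R \<alpha> - lj j) $ i" "real j / real M * z $ i"]
      by (simp add: y_def)
  qed
  then obtain j j' where jj: "j' < j" "j \<le> M" "\<And>i. \<bar>y j $ i - y j' $ i\<bar> < a i"
    using pigeonhole_close_pair[of M y "\<lambda>_. B + 1" a] widths(1) few_boxes by auto
  define K where "K = j - j'"
  have "real K = real j - real j'" using jj(1) by (simp add: K_def)
  have eq_\<alpha>: "real K *\<^sub>R \<alpha> + (lj j' - lj j) = (real j *\<^sub>R \<alpha> - lj j) - (real j' *\<^sub>R \<alpha> - lj j')"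
    unfolding \<open>real K = real j - real j'\<close> by (simp add: algebra_simps)
  have eq_z: "(real K / real M) *\<^sub>R z = (real j / real M) *\<^sub>R z - (real j' / real M) *\<^sub>R z"
    using \<open>real K = real j - real j'\<close> by (simp add: diff_divide_distrib scaleR_diff_left)
  have diff: "y j - y j' = \<phi> (real K *\<^sub>R \<alpha> + (lj j' - lj j)) - (real K / real M) *\<^sub>R z"
    unfolding y_def eq_\<alpha> eq_z linear_diff[OF \<open>linear \<phi>\<close>] by (simp add: algebra_simps)
  have "\<bar>\<phi> (real K *\<^sub>R \<alpha> + (lj j' - lj j)) $ i - real K / real M * z $ i\<bar> < a i" for i
    using jj(3)[of i] arg_cong[OF diff, of "\<lambda>v. v $ i"] by simp
  moreover have "K \<in> {1..M}" "lj j' - lj j \<in> L" using jj(1,2) lj(1) diff_closed by (auto simp: K_def)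
  ultimately show ?thesis by blast
qed

lemma approximation_along_direction:
  fixes \<alpha> u :: "real^'n"
  assumes diff_closed: "\<And>x y. x \<in> L \<Longrightarrow> y \<in> L \<Longrightarrow> x - y \<in> L"
    and covering: "\<And>x. \<exists>l\<in>L. norm (x - l) \<le> \<rho>"
    and "u \<noteq> 0"
  obtains E where "1 \<le> E"
    and "\<And>M h a w. 0 < h \<Longrightarrow> h \<le> 1 \<Longrightarrow> 0 < a \<Longrightarrow> a \<le> 1 \<Longrightarrow> 0 < w \<Longrightarrow> w \<le> 1 \<Longrightarrow>
          E ^ CARD('n) \<le> real M * (a * w ^ (CARD('n) - 1)) \<Longrightarrow>
          \<exists>K\<in>{1..M}. \<exists>l\<in>L. \<exists>t q. real K *\<^sub>R \<alpha> + l = t *\<^sub>R u + q \<and>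
            \<bar>t - real K * h / real M\<bar> < a \<and> norm q \<le> real CARD('n) * w"
proof -
  obtain i where "u $ i \<noteq> 0" using \<open>u \<noteq> 0\<close> by (auto simp: vec_eq_iff)
  define \<phi> where "\<phi> = oblique_coords u i"
  have "linear \<phi>" unfolding \<phi>_def by (rule linear_oblique_coords)
  then obtain B\<phi> where "B\<phi> > 0" and B\<phi>: "\<And>x. norm (\<phi> x) \<le> B\<phi> * norm x"
    using linear_bounded_pos by blast
  have "0 \<le> \<rho>" using covering[of 0] norm_ge_zero order_trans by blast
  have \<phi>_covering: "\<exists>l\<in>L. norm (\<phi> (x - l)) \<le> B\<phi> * \<rho>" for x
  proof -
    obtain l where "l \<in> L" "norm (x - l) \<le> \<rho>" using covering by blast
    moreover have "B\<phi> * norm (x - l) \<le> B\<phi> * \<rho>" using calculation(2) \<open>B\<phi> > 0\<close> by simp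
    ultimately show ?thesis using B\<phi>[of "x - l"] by force
  qed
  show thesis
  proof (rule that[of "2 * (B\<phi> * \<rho>) + 5"])
    show "1 \<le> 2 * (B\<phi> * \<rho>) + 5" using \<open>B\<phi> > 0\<close> \<open>0 \<le> \<rho>\<close> by simp
    fix M :: nat and h a w :: real
    assume "0 < h" "h \<le> 1" "0 < a" "a \<le> 1" "0 < w" "w \<le> 1"
      and volume: "(2 * (B\<phi> * \<rho>) + 5) ^ CARD('n) \<le> real M * (a * w ^ (CARD('n) - 1))"
    define a' where "a' j = (if j = i then a else w)" for j
    have "(\<Prod>j\<in>UNIV. a' j) = a * (\<Prod>j\<in>UNIV - {i}. w)"
      by (simp add: prod.remove[of UNIV i] a'_def)
    also have "\<dots> = a * w ^ (CARD('n) - 1)" by (simp add: card_Diff_singleton)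
    finally have "\<exists>K\<in>{1..M}. \<exists>l\<in>L. \<forall>j.
        \<bar>\<phi> (real K *\<^sub>R \<alpha> + l) $ j - real K / real M * axis i h $ j\<bar> < a' j"
      using volume \<open>0 < h\<close> \<open>h \<le> 1\<close> \<open>0 < a\<close> \<open>a \<le> 1\<close> \<open>0 < w\<close> \<open>w \<le> 1\<close>
      by (intro dirichlet_linear_coords[OF \<open>linear \<phi>\<close> diff_closed \<phi>_covering])
        (simp_all add: a'_def axis_def)
    then obtain K l where K: "K \<in> {1..M}" "l \<in> L" and close:
        "\<And>j. \<bar>\<phi> (real K *\<^sub>R \<alpha> + l) $ j - real K / real M * axis i h $ j\<bar> < a' j"
      by blast
    define t where "t = \<phi> (real K *\<^sub>R \<alpha> + l) $ i"
    define q where "q = (\<chi> j. if j = i then 0 else \<phi> (real K *\<^sub>R \<alpha> + l) $ j)"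
    have "real K *\<^sub>R \<alpha> + l = t *\<^sub>R u + q"
      using oblique_coords_decomp[OF \<open>u $ i \<noteq> 0\<close>] unfolding t_def q_def \<phi>_def by blast
    moreover have "\<bar>t - real K * h / real M\<bar> < a"
      using close[of i] by (simp add: t_def a'_def)
    moreover have "norm q \<le> real CARD('n) * w"
    proof (rule norm_le_card_mult)
      show "\<bar>q $ j\<bar> \<le> w" for j
        using close[of j] \<open>0 < w\<close> by (simp add: q_def a'_def axis_def split: if_splits)
    qed
    ultimately show "\<exists>K\<in>{1..M}. \<exists>l\<in>L. \<exists>t q. real K *\<^sub>R \<alpha> + l = t *\<^sub>R u + q \<and>
        \<bar>t - real K * h / real M\<bar> < a \<and> norm q \<le> real CARD('n) * w"
      using K by blast
  qed
qed

lemma scaled_box_volume: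
  assumes "0 < M" "0 < d"
  shows "real M * (x * real M powr (-1 / real d) * (y * real M powr (-1 / real d)) ^ (d - 1))
           = x * y ^ (d - 1)"
proof -
  define s where "s = real M powr (-1 / real d)"
  have "s * s ^ (d - 1) = 1 / real M"
    using assms power_Suc[of s "d - 1"]
    by (simp add: s_def powr_realpow[symmetric] powr_powr powr_neg_one)
  have "real M * (x * s * (y * s) ^ (d - 1)) = x * y ^ (d - 1) * (real M * (s * s ^ (d - 1)))"
    by (simp add: power_mult_distrib algebra_simps)
  also have "\<dots> = x * y ^ (d - 1)" using \<open>s * s ^ (d - 1) = 1 / real M\<close> assms(1) by simp
  finally show ?thesis unfolding s_def .
qed

lemma eventually_powr_neg_inverse_le:
  assumes "0 < s" "0 < d"
  obtains N0 where "\<And>M. N0 \<le> M \<Longrightarrow> 0 < M \<and> real M powr (-1 / real d) \<le> s"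
proof
  fix M assume M: "nat \<lceil>s powr (- real d)\<rceil> + 1 \<le> M"
  then have "s powr (- real d) \<le> real M" by linarith
  then have "real M powr (-1 / real d) \<le> (s powr (- real d)) powr (-1 / real d)"
    using \<open>0 < s\<close> by (intro powr_mono2') simp_all
  also have "\<dots> = s" using assms by (simp add: powr_powr)
  finally show "0 < M \<and> real M powr (-1 / real d) \<le> s" using M by simp
qed

text \<open>If K were small, K alpha + l would be shorter than bad approximability permits. Hence
  K h / M, and with it t, is large compared with q, so K alpha + l points into the cap around u.\<close>

lemma mem_pos_cone_of_approximation:
  fixes \<alpha> u q :: "real^'n"
  assumes cap: "\<And>x. norm x = 1 \<Longrightarrow> norm (x - u) < \<eta> \<Longrightarrow> x \<in> D" and "norm u = 1"
    and bad: "\<And>k l. k \<in> \<int> \<Longrightarrow> k \<noteq> 0 \<Longrightarrow> l \<in> L \<Longrightarrow>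
                c * \<bar>k\<bar> powr (-1 / real CARD('n)) < norm (k *\<^sub>R \<alpha> + l)"
    and "0 < c" "K \<in> {1..M}" "l \<in> L" and decomp: "real K *\<^sub>R \<alpha> + l = t *\<^sub>R u + q"
    and close: "\<bar>t - real K * h / real M\<bar> < \<delta> * h" and "norm q \<le> \<rho>"
    and "0 < h" "0 < \<delta>" "\<delta> \<le> 1"
    and direction: "2 * \<rho> < min \<eta> 1 * (\<delta> * h)"
    and not_small: "3 * \<delta> * h + \<rho> \<le> c * (2 * \<delta> * real M) powr (-1 / real CARD('n))"
  shows "real K *\<^sub>R \<alpha> + l \<in> pos_cone D \<and> norm (real K *\<^sub>R \<alpha> + l) \<le> 2 * h + \<rho>"
proof -
  have norm_le: "norm (real K *\<^sub>R \<alpha> + l) \<le> \<bar>t\<bar> + \<rho>"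
    using decomp norm_triangle_ineq[of "t *\<^sub>R u" q] \<open>norm u = 1\<close> \<open>norm q \<le> \<rho>\<close> by simp
  have "0 < K" "0 < M" using \<open>K \<in> {1..M}\<close> by auto
  have "2 * \<delta> * real M < real K"
  proof (rule ccontr)
    assume K_small: "\<not> 2 * \<delta> * real M < real K"
    then have "real K * h / real M \<le> 2 * \<delta> * h"
      using \<open>0 < h\<close> \<open>0 < M\<close> by (simp add: field_simps mult_right_mono)
    moreover have "0 \<le> real K * h / real M" using \<open>0 < h\<close> by simp
    ultimately have "\<bar>t\<bar> \<le> 3 * \<delta> * h"
      using close mult_pos_pos[OF \<open>0 < \<delta>\<close> \<open>0 < h\<close>] unfolding abs_le_iff abs_less_iff by linarith
    with norm_le not_small
    have "norm (real K *\<^sub>R \<alpha> + l) \<le> c * (2 * \<delta> * real M) powr (-1 / real CARD('n))"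
      by linarith
    also have "\<dots> \<le> c * real K powr (-1 / real CARD('n))"
      using K_small \<open>0 < K\<close> \<open>0 < c\<close> by (intro mult_left_mono powr_mono2') simp_all
    also have "\<dots> < norm (real K *\<^sub>R \<alpha> + l)"
      using bad[of "real K" l] \<open>l \<in> L\<close> \<open>0 < K\<close> by simp
    finally show False by simp
  qed
  then have "2 * \<delta> * h < real K * h / real M"
    using \<open>0 < h\<close> \<open>0 < M\<close> by (simp add: field_simps)
  moreover have "real K * h / real M \<le> h"
    using \<open>0 < h\<close> \<open>K \<in> {1..M}\<close> by (simp add: field_simps)
  moreover have "\<delta> * h \<le> h" using \<open>\<delta> \<le> 1\<close> \<open>0 < h\<close> by simp
  ultimately have t: "\<delta> * h < t" "t \<le> 2 * h"
    using close unfolding abs_less_iff by linarith+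
  have "0 < t" using t(1) mult_pos_pos[OF \<open>0 < \<delta>\<close> \<open>0 < h\<close>] by linarith
  have "0 < min \<eta> 1 * (\<delta> * h)" using direction \<open>norm q \<le> \<rho>\<close> norm_ge_zero[of q] by linarith
  then have "0 < \<eta>" using mult_pos_pos[OF \<open>0 < \<delta>\<close> \<open>0 < h\<close>] by (simp add: zero_less_mult_iff)
  have "min \<eta> 1 * (\<delta> * h) \<le> \<eta> * t"
    using t \<open>0 < \<eta>\<close> \<open>0 < h\<close> \<open>0 < \<delta>\<close> by (intro mult_mono) simp_all
  moreover have "min \<eta> 1 * (\<delta> * h) \<le> \<delta> * h"
    using \<open>0 < h\<close> \<open>0 < \<delta>\<close> by (simp add: mult_le_cancel_right1 min_def)
  ultimately have "norm q < t" "2 * norm q < \<eta> * t"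
    using direction \<open>norm q \<le> \<rho>\<close> t(1) norm_ge_zero[of q] by linarith+
  then have "t *\<^sub>R u + q \<in> pos_cone D"
    using scaleR_add_mem_pos_cone[of u \<eta> D t q] cap \<open>norm u = 1\<close> \<open>0 < t\<close> by blast
  with \<open>0 < t\<close> show ?thesis using decomp norm_le t(2) by simp
qed

text \<open>At scale s = M^(-1/d) the boxes have width \<delta> H s along u and \<epsilon> s across it; their volume
  is fixed by the balance condition, and the two inequalities feed the direction and the
  non-smallness hypotheses of the previous lemma.\<close>

lemma cone_parameters:
  fixes c \<eta> A :: real and d :: nat
  assumes "0 < c" "0 < \<eta>" "1 \<le> A" "0 < d"
  obtains \<epsilon> \<delta> H where "0 < \<epsilon>" "\<epsilon> \<le> 1" "0 < \<delta>" "\<delta> \<le> 1" "0 < H"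
    "\<delta> * H * \<epsilon> ^ (d - 1) = A"
    "2 * real d * \<epsilon> < min \<eta> 1 * (\<delta> * H)"
    "3 * (\<delta> * H) + real d * \<epsilon> \<le> c * (2 * \<delta>) powr (-1 / real d)"
proof -
  define \<epsilon> where "\<epsilon> = min \<eta> 1 / (4 * real d)"
  have \<epsilon>: "0 < \<epsilon>" "\<epsilon> \<le> 1" "2 * real d * \<epsilon> < min \<eta> 1"
    using assms(2,4) by (auto simp: \<epsilon>_def field_simps)
  define Y where "Y = 3 * A / \<epsilon> ^ (d - 1) + real d * \<epsilon>"
  have "0 < Y" using \<epsilon> assms(3) by (simp add: Y_def add_pos_nonneg)
  define \<delta> where "\<delta> = min 1 ((c / Y) ^ d / 2)"
  have \<delta>: "0 < \<delta>" "\<delta> \<le> 1" using \<open>0 < Y\<close> assms(1) by (auto simp: \<delta>_def)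
  define H where "H = A / (\<delta> * \<epsilon> ^ (d - 1))"
  have \<delta>H: "\<delta> * H = A / \<epsilon> ^ (d - 1)" using \<delta> \<epsilon> by (simp add: H_def)
  have "1 \<le> \<delta> * H"
    unfolding \<delta>H using \<epsilon> assms(3) power_le_one[of \<epsilon> "d - 1"] by (simp add: le_divide_eq)
  have "Y / c = ((c / Y) ^ d) powr (-1 / real d)"
    using \<open>0 < Y\<close> assms(1,4) by (simp add: powr_realpow[symmetric] powr_powr powr_neg_one)
  also have "\<dots> \<le> (2 * \<delta>) powr (-1 / real d)"
    using \<delta> by (intro powr_mono2') (simp_all add: \<delta>_def)
  finally have "Y \<le> c * (2 * \<delta>) powr (-1 / real d)"
    using assms(1) by (simp add: divide_le_eq mult.commute)
  show thesis
  proof (rule that[of \<epsilon> \<delta> H])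
    show "0 < H" using \<delta> \<epsilon> assms(3) by (simp add: H_def)
    show "\<delta> * H * \<epsilon> ^ (d - 1) = A" using \<delta>H \<epsilon> by simp
    show "2 * real d * \<epsilon> < min \<eta> 1 * (\<delta> * H)"
    proof -
      have "min \<eta> 1 * 1 \<le> min \<eta> 1 * (\<delta> * H)"
        using \<open>1 \<le> \<delta> * H\<close> assms(2) by (intro mult_left_mono) auto
      then show ?thesis using \<epsilon>(3) by linarith
    qed
    show "3 * (\<delta> * H) + real d * \<epsilon> \<le> c * (2 * \<delta>) powr (-1 / real d)"
      using \<open>Y \<le> _\<close> unfolding \<delta>H Y_def by simp
  qed (use \<epsilon> \<delta> in auto)
qed

lemma exists_short_vector_in_cone:
  fixes \<alpha> u :: "real^'n"
  assumes diff_closed: "\<And>x y. x \<in> L \<Longrightarrow> y \<in> L \<Longrightarrow> x - y \<in> L"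
    and covering: "\<And>x. \<exists>l\<in>L. norm (x - l) \<le> \<rho>"
    and bad: "\<And>k l. k \<in> \<int> \<Longrightarrow> k \<noteq> 0 \<Longrightarrow> l \<in> L \<Longrightarrow>
                c * \<bar>k\<bar> powr (-1 / real CARD('n)) < norm (k *\<^sub>R \<alpha> + l)"
    and "0 < c"
    and cap: "\<And>x. norm x = 1 \<Longrightarrow> norm (x - u) < \<eta> \<Longrightarrow> x \<in> D" and "norm u = 1" "0 < \<eta>"
  obtains R N0 where "0 < R"
    "\<And>M. N0 \<le> M \<Longrightarrow> \<exists>K\<in>{1..M}. \<exists>l\<in>L. real K *\<^sub>R \<alpha> + l \<in> pos_cone D \<and>
        norm (real K *\<^sub>R \<alpha> + l) \<le> R * real M powr (-1 / real CARD('n))"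
proof -
  define d where "d = CARD('n)"
  have "0 < d" by (simp add: d_def)
  have "u \<noteq> 0" using \<open>norm u = 1\<close> by auto
  obtain E where "1 \<le> E" and approx: "\<And>M h a w. 0 < h \<Longrightarrow> h \<le> 1 \<Longrightarrow> 0 < a \<Longrightarrow> a \<le> 1 \<Longrightarrow>
      0 < w \<Longrightarrow> w \<le> 1 \<Longrightarrow> E ^ d \<le> real M * (a * w ^ (d - 1)) \<Longrightarrow>
      \<exists>K\<in>{1..M}. \<exists>l\<in>L. \<exists>t q. real K *\<^sub>R \<alpha> + l = t *\<^sub>R u + q \<and>
        \<bar>t - real K * h / real M\<bar> < a \<and> norm q \<le> real d * w"
    using approximation_along_direction[where \<alpha> = \<alpha>, OF diff_closed covering \<open>u \<noteq> 0\<close>, folded d_def]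
    by metis
  obtain \<epsilon> \<delta> H where "0 < \<epsilon>" "\<epsilon> \<le> 1" "0 < \<delta>" "\<delta> \<le> 1" "0 < H"
    and balance: "\<delta> * H * \<epsilon> ^ (d - 1) = E ^ d"
    and direction: "2 * real d * \<epsilon> < min \<eta> 1 * (\<delta> * H)"
    and not_small: "3 * (\<delta> * H) + real d * \<epsilon> \<le> c * (2 * \<delta>) powr (-1 / real d)"
    using cone_parameters[OF \<open>0 < c\<close> \<open>0 < \<eta>\<close> _ \<open>0 < d\<close>, of "E ^ d"] \<open>1 \<le> E\<close> by auto
  obtain N0 where N0: "\<And>M. N0 \<le> M \<Longrightarrow> 0 < M \<and> real M powr (-1 / real d) \<le> min 1 (1 / H)"
    using eventually_powr_neg_inverse_le[of "min 1 (1 / H)" d] \<open>0 < H\<close> \<open>0 < d\<close> by auto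
  show thesis
  proof (rule that[of "2 * H + real d * \<epsilon>" N0])
    show "0 < 2 * H + real d * \<epsilon>" using \<open>0 < H\<close> \<open>0 < \<epsilon>\<close> by (simp add: add_pos_nonneg)
    fix M assume "N0 \<le> M"
    define s where "s = real M powr (-1 / real d)"
    have "0 < M" "s \<le> 1" "s \<le> 1 / H" using N0[OF \<open>N0 \<le> M\<close>] by (auto simp: s_def)
    have "0 < s" using \<open>0 < M\<close> by (simp add: s_def)
    have "H * s \<le> 1" using \<open>s \<le> 1 / H\<close> \<open>0 < H\<close> by (simp add: field_simps)
    have "E ^ d = real M * (\<delta> * H * s * (\<epsilon> * s) ^ (d - 1))"
      by (simp only: s_def scaled_box_volume[OF \<open>0 < M\<close> \<open>0 < d\<close>] balance)
    then have "\<exists>K\<in>{1..M}. \<exists>l\<in>L. \<exists>t q. real K *\<^sub>R \<alpha> + l = t *\<^sub>R u + q \<and>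
        \<bar>t - real K * (H * s) / real M\<bar> < \<delta> * (H * s) \<and> norm q \<le> real d * (\<epsilon> * s)"
      using \<open>0 < H\<close> \<open>0 < s\<close> \<open>H * s \<le> 1\<close> \<open>0 < \<delta>\<close> \<open>\<delta> \<le> 1\<close> \<open>0 < \<epsilon>\<close> \<open>\<epsilon> \<le> 1\<close> \<open>s \<le> 1\<close>
      by (intro approx) (simp_all add: mult_le_one mult.assoc)
    then obtain K l t q where "K \<in> {1..M}" "l \<in> L" and decomp: "real K *\<^sub>R \<alpha> + l = t *\<^sub>R u + q"
      and close: "\<bar>t - real K * (H * s) / real M\<bar> < \<delta> * (H * s)" and "norm q \<le> real d * (\<epsilon> * s)"
      by blast
    have "2 * (real d * (\<epsilon> * s)) < min \<eta> 1 * (\<delta> * (H * s))"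
      using mult_strict_right_mono[OF direction \<open>0 < s\<close>] by (simp add: algebra_simps)
    moreover have "3 * \<delta> * (H * s) + real d * (\<epsilon> * s) \<le> c * (2 * \<delta> * real M) powr (-1 / real d)"
      using mult_right_mono[OF not_small less_imp_le[OF \<open>0 < s\<close>]]
      by (simp add: s_def powr_mult algebra_simps)
    ultimately have "real K *\<^sub>R \<alpha> + l \<in> pos_cone D \<and>
        norm (real K *\<^sub>R \<alpha> + l) \<le> 2 * (H * s) + real d * (\<epsilon> * s)"
      using mem_pos_cone_of_approximation[OF cap \<open>norm u = 1\<close> bad \<open>0 < c\<close> \<open>K \<in> {1..M}\<close> \<open>l \<in> L\<close>
          decomp close \<open>norm q \<le> _\<close>] \<open>0 < H\<close> \<open>0 < s\<close> \<open>0 < \<delta>\<close> \<open>\<delta> \<le> 1\<close>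
      unfolding d_def by simp
    then show "\<exists>K\<in>{1..M}. \<exists>l\<in>L. real K *\<^sub>R \<alpha> + l \<in> pos_cone D \<and>
        norm (real K *\<^sub>R \<alpha> + l) \<le> (2 * H + real d * \<epsilon>) * real M powr (-1 / real CARD('n))"
      using \<open>K \<in> {1..M}\<close> \<open>l \<in> L\<close> by (auto simp: s_def d_def algebra_simps)
  qed
qed

section \<open>Counting the gaps\<close>

definition short_vectors :: "real^'n \<Rightarrow> (real^'n) set \<Rightarrow> real \<Rightarrow> real \<Rightarrow> (real^'n) set" where
  "short_vectors \<alpha> L k0 r = {k *\<^sub>R \<alpha> + l | k l. k \<in> \<int> \<and> \<bar>k\<bar> \<le> k0 \<and> l \<in> L \<and> norm (k *\<^sub>R \<alpha> + l) \<le> r}"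

lemma card_short_vectors_le:
  fixes \<alpha> :: "real^'n"
  assumes diff_closed: "\<And>x y. x \<in> L \<Longrightarrow> y \<in> L \<Longrightarrow> x - y \<in> L"
    and discrete: "\<And>l. l \<in> L \<Longrightarrow> l \<noteq> 0 \<Longrightarrow> \<mu> \<le> norm l"
    and bad: "\<And>k l. k \<in> \<int> \<Longrightarrow> k \<noteq> 0 \<Longrightarrow> l \<in> L \<Longrightarrow>
                c * \<bar>k\<bar> powr (-1 / real CARD('n)) < norm (k *\<^sub>R \<alpha> + l)"
    and "0 < c" "1 \<le> k0" "0 \<le> r" "2 * r < \<mu>"
  shows "finite (short_vectors \<alpha> L k0 r)"
    "real (card (short_vectors \<alpha> L k0 r))
       \<le> (4 * real CARD('n) * r / (c * (2 * k0) powr (-1 / real CARD('n))) + 3) ^ CARD('n)"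
proof -
  define s where "s = c * (2 * k0) powr (-1 / real CARD('n))"
  have "0 < s" using \<open>0 < c\<close> \<open>1 \<le> k0\<close> by (simp add: s_def)
  have "s \<le> norm (x - y)"
    if xy: "x \<in> short_vectors \<alpha> L k0 r" "y \<in> short_vectors \<alpha> L k0 r" "x \<noteq> y" for x y
  proof -
    obtain k l k' l' where x: "x = k *\<^sub>R \<alpha> + l" "k \<in> \<int>" "\<bar>k\<bar> \<le> k0" "l \<in> L" "norm x \<le> r"
      and y: "y = k' *\<^sub>R \<alpha> + l'" "k' \<in> \<int>" "\<bar>k'\<bar> \<le> k0" "l' \<in> L" "norm y \<le> r"
      using xy(1,2) unfolding short_vectors_def by blast
    have diff: "x - y = (k - k') *\<^sub>R \<alpha> + (l - l')" by (simp add: x(1) y(1) algebra_simps)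
    have "k \<noteq> k'"
    proof
      assume "k = k'"
      then have "x - y = l - l'" using diff by simp
      moreover have "l \<noteq> l'" using calculation \<open>x \<noteq> y\<close> by auto
      ultimately have "\<mu> \<le> norm (x - y)"
        using discrete[of "l - l'"] diff_closed[OF x(4) y(4)] by simp
      moreover have "norm (x - y) \<le> 2 * r" using norm_triangle_ineq4[of x y] x(5) y(5) by simp
      ultimately show False using \<open>2 * r < \<mu>\<close> by simp
    qed
    have "s \<le> c * \<bar>k - k'\<bar> powr (-1 / real CARD('n))"
      unfolding s_def using \<open>k \<noteq> k'\<close> x(3) y(3) \<open>0 < c\<close>
      by (intro mult_left_mono powr_mono2') simp_all
    also have "\<dots> < norm (x - y)"
      using bad[of "k - k'" "l - l'"] diff diff_closed x(2,4) y(2,4) \<open>k \<noteq> k'\<close> by simp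
    finally show ?thesis by simp
  qed
  then show "finite (short_vectors \<alpha> L k0 r)"
    "real (card (short_vectors \<alpha> L k0 r))
       \<le> (4 * real CARD('n) * r / (c * (2 * k0) powr (-1 / real CARD('n))) + 3) ^ CARD('n)"
    using card_le_if_separated[OF \<open>0 < s\<close> \<open>0 \<le> r\<close>, of "short_vectors \<alpha> L k0 r"]
    unfolding s_def by (auto simp: short_vectors_def)
qed

lemma card_short_vectors_at_scale_le:
  fixes \<alpha> :: "real^'n"
  assumes diff_closed: "\<And>x y. x \<in> L \<Longrightarrow> y \<in> L \<Longrightarrow> x - y \<in> L"
    and discrete: "\<And>l. l \<in> L \<Longrightarrow> l \<noteq> 0 \<Longrightarrow> \<mu> \<le> norm l"
    and bad: "\<And>k l. k \<in> \<int> \<Longrightarrow> k \<noteq> 0 \<Longrightarrow> l \<in> L \<Longrightarrow>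
                c * \<bar>k\<bar> powr (-1 / real CARD('n)) < norm (k *\<^sub>R \<alpha> + l)"
    and "0 < c" "0 < M" "0 \<le> R" "2 * R * real M powr (-1 / real CARD('n)) < \<mu>"
  defines "V \<equiv> short_vectors \<alpha> L (3 * real M) (R * real M powr (-1 / real CARD('n)))"
  shows "finite V"
    "real (card V) \<le> (4 * real CARD('n) * R / (c * 6 powr (-1 / real CARD('n))) + 3) ^ CARD('n)"
proof -
  define s where "s = real M powr (-1 / real CARD('n))"
  have "(2 * (3 * real M)) powr (-1 / real CARD('n)) = 6 powr (-1 / real CARD('n)) * s"
    by (simp add: s_def powr_mult)
  moreover have "0 < s" using \<open>0 < M\<close> by (simp add: s_def)
  ultimately show "finite V"
    "real (card V) \<le> (4 * real CARD('n) * R / (c * 6 powr (-1 / real CARD('n))) + 3) ^ CARD('n)"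
    using card_short_vectors_le[OF diff_closed discrete bad \<open>0 < c\<close>, of "3 * real M" "R * s"]
      assms(5-7) unfolding V_def s_def[symmetric] by (simp_all add: mult.assoc)
qed

lemma Inf_mem_if_finite_below:
  fixes S :: "real set"
  assumes "x \<in> S" "x \<le> b" "finite (S \<inter> {..b})"
  shows "Inf S \<in> S \<inter> {..b}"
proof -
  define z where "z = Min (S \<inter> {..b})"
  have z: "z \<in> S \<inter> {..b}" using assms unfolding z_def by (intro Min_in) auto
  have "Inf S = z"
  proof (rule cInf_eq_minimum)
    show "z \<in> S" using z by simp
    show "z \<le> y" if "y \<in> S" for y
      using that z assms(3) unfolding z_def by (cases "y \<le> b") auto
  qed
  then show ?thesis using z by simp
qed

lemma delta_mem_norm_image:
  assumes "finite V"
    and witness: "\<exists>m l. 1 \<le> m \<and> m \<le> N \<and> l \<in> L \<and> (real m - real n) *\<^sub>R \<alpha> + l \<in> pos_cone D \<and>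
                    norm ((real m - real n) *\<^sub>R \<alpha> + l) \<le> b"
    and short: "\<And>m l. 1 \<le> m \<Longrightarrow> m \<le> N \<Longrightarrow> l \<in> L \<Longrightarrow> norm ((real m - real n) *\<^sub>R \<alpha> + l) \<le> b \<Longrightarrow>
                  (real m - real n) *\<^sub>R \<alpha> + l \<in> V"
  shows "delta D \<alpha> L n N \<in> norm ` V"
proof -
  define S where "S = {norm ((real m - real n) *\<^sub>R \<alpha> + l) | m l.
      1 \<le> m \<and> m \<le> N \<and> l \<in> L \<and> (real m - real n) *\<^sub>R \<alpha> + l \<in> pos_cone D}"
  have "S \<inter> {..b} \<subseteq> norm ` V" using short by (auto simp: S_def)
  moreover obtain x where "x \<in> S" "x \<le> b" using witness unfolding S_def by blast
  ultimately have "Inf S \<in> S \<inter> {..b}"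
    using \<open>finite V\<close> by (intro Inf_mem_if_finite_below) (auto intro: finite_subset)
  moreover have "delta D \<alpha> L n N = Inf S" by (simp add: delta_def S_def)
  ultimately show ?thesis using \<open>S \<inter> {..b} \<subseteq> norm ` V\<close> by auto
qed

lemma exists_cone_vector_from_every_start:
  assumes fwd: "\<exists>K\<in>{1..M}. \<exists>l\<in>L. real K *\<^sub>R \<alpha> + l \<in> C \<and> norm (real K *\<^sub>R \<alpha> + l) \<le> b1"
    and bwd: "\<exists>K\<in>{1..M}. \<exists>l\<in>L. real K *\<^sub>R (- \<alpha>) + l \<in> C \<and> norm (real K *\<^sub>R (- \<alpha>) + l) \<le> b2"
    and "2 * M + 1 \<le> N" "n \<in> {1..N}"
  shows "\<exists>m l. 1 \<le> m \<and> m \<le> N \<and> l \<in> L \<and> (real m - real n) *\<^sub>R \<alpha> + l \<in> C \<and>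
           norm ((real m - real n) *\<^sub>R \<alpha> + l) \<le> max b1 b2"
proof (cases "n + M \<le> N")
  case True
  obtain K l where "K \<in> {1..M}" "l \<in> L" "real K *\<^sub>R \<alpha> + l \<in> C" "norm (real K *\<^sub>R \<alpha> + l) \<le> b1"
    using fwd by blast
  moreover have "real (n + K) - real n = real K" by simp
  ultimately show ?thesis using True \<open>n \<in> {1..N}\<close> by (intro exI[of _ "n + K"] exI[of _ l]) auto
next
  case False
  obtain K l where "K \<in> {1..M}" "l \<in> L" "real K *\<^sub>R (- \<alpha>) + l \<in> C" "norm (real K *\<^sub>R (- \<alpha>) + l) \<le> b2"
    using bwd by blast
  moreover have "real (n - K) - real n = - real K" using False \<open>K \<in> {1..M}\<close> \<open>2 * M + 1 \<le> N\<close> by auto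
  ultimately show ?thesis using False \<open>n \<in> {1..N}\<close> \<open>2 * M + 1 \<le> N\<close>
    by (intro exI[of _ "n - K"] exI[of _ l]) auto
qed

lemma gN_le: "gN N D \<alpha> L \<le> N"
  unfolding gN_def using card_image_le[of "{1..N}"] by simp

lemma gN_le_card:
  assumes "finite V" "\<And>n. n \<in> {1..N} \<Longrightarrow> delta D \<alpha> L n N \<in> norm ` V"
  shows "gN N D \<alpha> L \<le> card V"
proof -
  have "gN N D \<alpha> L \<le> card (norm ` V)"
    unfolding gN_def using assms by (intro card_mono) auto
  also have "\<dots> \<le> card V" using assms(1) by (rule card_image_le)
  finally show ?thesis .
qed

lemma gN_eventually_bounded:
  fixes \<alpha> u :: "real^'n"
  assumes diff_closed: "\<And>x y. x \<in> L \<Longrightarrow> y \<in> L \<Longrightarrow> x - y \<in> L"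
    and covering: "\<And>x. \<exists>l\<in>L. norm (x - l) \<le> \<rho>"
    and discrete: "\<And>l. l \<in> L \<Longrightarrow> l \<noteq> 0 \<Longrightarrow> \<mu> \<le> norm l" and "0 < \<mu>"
    and bad: "\<And>k l. k \<in> \<int> \<Longrightarrow> k \<noteq> 0 \<Longrightarrow> l \<in> L \<Longrightarrow>
                c * \<bar>k\<bar> powr (-1 / real CARD('n)) < norm (k *\<^sub>R \<alpha> + l)"
    and "0 < c"
    and cap: "\<And>x. norm x = 1 \<Longrightarrow> norm (x - u) < \<eta> \<Longrightarrow> x \<in> D" and "norm u = 1" "0 < \<eta>"
  obtains N0 C where "\<And>N. N0 \<le> N \<Longrightarrow> gN N D \<alpha> L \<le> C"
proof -
  define d where "d = CARD('n)"
  have bad_uminus: "c * \<bar>k\<bar> powr (-1 / real CARD('n)) < norm (k *\<^sub>R (- \<alpha>) + l)"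
    if "k \<in> \<int>" "k \<noteq> 0" "l \<in> L" for k l
    using bad[of "- k" l] that by simp
  obtain R1 N1 where "0 < R1" and fwd: "\<And>M. N1 \<le> M \<Longrightarrow> \<exists>K\<in>{1..M}. \<exists>l\<in>L.
      real K *\<^sub>R \<alpha> + l \<in> pos_cone D \<and> norm (real K *\<^sub>R \<alpha> + l) \<le> R1 * real M powr (-1 / real d)"
    by (rule exists_short_vector_in_cone[where \<alpha> = \<alpha>, OF diff_closed covering bad \<open>0 < c\<close> cap
        \<open>norm u = 1\<close> \<open>0 < \<eta>\<close>, folded d_def]) (assumption | rule that)+
  obtain R2 N2 where "0 < R2" and bwd: "\<And>M. N2 \<le> M \<Longrightarrow> \<exists>K\<in>{1..M}. \<exists>l\<in>L.
      real K *\<^sub>R (- \<alpha>) + l \<in> pos_cone D \<and> norm (real K *\<^sub>R (- \<alpha>) + l) \<le> R2 * real M powr (-1 / real d)"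
    by (rule exists_short_vector_in_cone[where \<alpha> = "- \<alpha>", OF diff_closed covering bad_uminus \<open>0 < c\<close> cap
        \<open>norm u = 1\<close> \<open>0 < \<eta>\<close>, folded d_def]) (assumption | rule that)+
  define R where "R = max R1 R2"
  have "0 < R" using \<open>0 < R1\<close> by (simp add: R_def)
  obtain M0 where M0: "\<And>M. M0 \<le> M \<Longrightarrow> 0 < M \<and> real M powr (-1 / real d) \<le> \<mu> / (4 * R)"
    using eventually_powr_neg_inverse_le[of "\<mu> / (4 * R)" d] \<open>0 < \<mu>\<close> \<open>0 < R\<close> by (auto simp: d_def)
  define C where "C = (4 * real d * R / (c * 6 powr (-1 / real d)) + 3) ^ d"
  show thesis
  proof (rule that[of "2 * max M0 (max N1 N2) + 1" "nat \<lceil>C\<rceil>"])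
    fix N assume N: "2 * max M0 (max N1 N2) + 1 \<le> N"
    define M where "M = (N - 1) div 2"
    have "M0 \<le> M" "N1 \<le> M" "N2 \<le> M" "2 * M + 1 \<le> N" "N \<le> 2 * M + 2" using N by (auto simp: M_def)
    define t where "t = real M powr (-1 / real d)"
    have "0 < M" "t \<le> \<mu> / (4 * R)" using M0[OF \<open>M0 \<le> M\<close>] by (auto simp: t_def)
    have "0 < t" using \<open>0 < M\<close> by (simp add: t_def)
    have "2 * R * t < \<mu>"
      using \<open>t \<le> \<mu> / (4 * R)\<close> \<open>0 < R\<close> \<open>0 < \<mu>\<close> by (simp add: field_simps)
    define V where "V = short_vectors \<alpha> L (3 * real M) (R * t)"
    have "finite V" "real (card V) \<le> C"
      using card_short_vectors_at_scale_le[OF diff_closed discrete bad \<open>0 < c\<close> \<open>0 < M\<close>, of R]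
        \<open>0 < R\<close> \<open>2 * R * t < \<mu>\<close> unfolding V_def C_def t_def d_def by auto
    have "delta D \<alpha> L n N \<in> norm ` V" if "n \<in> {1..N}" for n
    proof (rule delta_mem_norm_image[OF \<open>finite V\<close>])
      show "\<exists>m l. 1 \<le> m \<and> m \<le> N \<and> l \<in> L \<and> (real m - real n) *\<^sub>R \<alpha> + l \<in> pos_cone D \<and>
          norm ((real m - real n) *\<^sub>R \<alpha> + l) \<le> R * t"
        using exists_cone_vector_from_every_start[OF fwd[OF \<open>N1 \<le> M\<close>] bwd[OF \<open>N2 \<le> M\<close>]
            \<open>2 * M + 1 \<le> N\<close> that] \<open>0 < t\<close>
        by (simp add: t_def R_def max_mult_distrib_right)
      fix m l assume "1 \<le> m" "m \<le> N" "l \<in> L" "norm ((real m - real n) *\<^sub>R \<alpha> + l) \<le> R * t"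
      moreover have "\<bar>real m - real n\<bar> \<le> 3 * real M"
        using \<open>1 \<le> m\<close> \<open>m \<le> N\<close> that \<open>N \<le> 2 * M + 2\<close> \<open>0 < M\<close> by (simp add: abs_le_iff)
      moreover have "real m - real n \<in> \<int>" by simp
      ultimately show "(real m - real n) *\<^sub>R \<alpha> + l \<in> V"
        unfolding V_def short_vectors_def by blast
    qed
    then have "gN N D \<alpha> L \<le> card V" by (rule gN_le_card[OF \<open>finite V\<close>])
    also have "card V \<le> nat \<lceil>C\<rceil>"
      using order_trans[OF \<open>real (card V) \<le> C\<close> real_nat_ceiling_ge] by (simp only: of_nat_le_iff)
    finally show "gN N D \<alpha> L \<le> nat \<lceil>C\<rceil>" .
  qed
qed

theorem theorem1p6:
  fixes L :: "(real^'n) set" and \<alpha> :: "real^'n" and D :: "(real^'n) set"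
  assumes "CARD('n) \<ge> 2"
    and "unimodular_lattice L"
    and "bad_approx \<alpha> L"
    and "D \<subseteq> sphere 0 1"
    and "\<exists>U. openin (top_of_set (sphere 0 1)) U \<and> U \<noteq> {} \<and> U \<subseteq> D"
  shows "\<exists>C::nat. \<forall>N::nat. N \<ge> 1 \<longrightarrow> gN N D \<alpha> L \<le> C"
proof -
  \<comment> \<open>The argument works in every dimension and only uses a cap inside D.\<close>
  obtain \<rho> \<mu> where diff_closed: "\<And>x y. x \<in> L \<Longrightarrow> y \<in> L \<Longrightarrow> x - y \<in> L"
    and neg_closed: "\<And>l. l \<in> L \<Longrightarrow> - l \<in> L"
    and covering: "\<And>x. \<exists>l\<in>L. norm (x - l) \<le> \<rho>"
    and "0 < \<mu>" and discrete: "\<And>l. l \<in> L \<Longrightarrow> l \<noteq> 0 \<Longrightarrow> \<mu> \<le> norm l"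
    by (rule unimodular_latticeE[OF assms(2)]) (assumption | rule that)+
  obtain c where "0 < c" and bad: "\<And>k l. k \<in> \<int> \<Longrightarrow> k \<noteq> 0 \<Longrightarrow> l \<in> L \<Longrightarrow>
      c * \<bar>k\<bar> powr (-1 / real CARD('n)) < norm (k *\<^sub>R \<alpha> + l)"
    by (rule bad_approx_norm_lower_bound[OF assms(3) neg_closed]) (assumption | rule that)+
  obtain U where U: "openin (top_of_set (sphere 0 1)) U" "U \<noteq> {}" "U \<subseteq> D" using assms(5) by blast
  obtain u \<eta> where "norm u = 1" "0 < \<eta>" and cap: "\<And>x. norm x = 1 \<Longrightarrow> norm (x - u) < \<eta> \<Longrightarrow> x \<in> D"
    using openin_sphere_contains_cap[OF U(1,2)] U(3) by (metis subsetD)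
  obtain N0 C where "\<And>N. N0 \<le> N \<Longrightarrow> gN N D \<alpha> L \<le> C"
    by (rule gN_eventually_bounded[OF diff_closed covering discrete \<open>0 < \<mu>\<close> bad \<open>0 < c\<close> cap
          \<open>norm u = 1\<close> \<open>0 < \<eta>\<close>]) (assumption | rule that)+
  have "gN N D \<alpha> L \<le> max N0 C" for N
  proof (cases "N0 \<le> N")
    case False
    then show ?thesis using gN_le[of N D \<alpha> L] by simp
  qed (simp add: \<open>\<And>N. N0 \<le> N \<Longrightarrow> gN N D \<alpha> L \<le> C\<close> le_max_iff_disj)
  then show ?thesis by blast
qed

end
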